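(* Let $p\in(0,1)$, let $k$ be a positive integer, and let $u_1\ge u_2\ge\dots\ge u_{3k}\ge0$. Then $$\Big(\sum_{i=k+1}^{3k}u_i^2\Big)^{1/2}\le C_1(p)k^{\frac12-\frac1p}\Big(\sum_{i=1}^{2k}u_i^p\Big)^{1/p},\qquad C_1(p)=\begin{cases}(\frac p2)^{\frac12}\big(\frac{2}{2-p}\big)^{\frac12-\frac1p}, & p\in(0,p^{\star}],\\ 2^{\frac12-\frac1p}, & p\in(p^{\star},1).\end{cases}$$
   Context: $p^{\star}\approx0.45418$ is the unique solution in $(0,1]$ of $(\frac{p}{2})^{1/2}(2-p)^{\frac1p-\frac12}=1$. *)

theory Defs
  imports "HOL-Analysis.Analysis"
begin

definition pstar :: real where
  "pstar = (THE p. p \<in> {0<..1} \<and> (p/2) powr (1/2) * (2 - p) powr (1/p - 1/2) = 1)"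

definition C1 :: "real \<Rightarrow> real" where
  "C1 p = (if p \<le> pstar then (p/2) powr (1/2) * (2/(2 - p)) powr (1/2 - 1/p)
           else 2 powr (1/2 - 1/p))"

end

theory Submission
  imports Defs
begin

text \<open>Write u as a nonnegative combination of the step sequences 1 on [1, j]
  (the layer-cake decomposition). The left-hand side is a Euclidean norm, hence subadditive,
  while for p \<le> 1 the right-hand side is superadditive on nonnegative sequences (reverse
  Minkowski inequality). So it suffices to treat a single step of length j, where the claim
  reads sqrt(j - k) \<le> C k^(1/2 - 1/p) min(j, 2k)^(1/p). For j \<le> 2k this follows from the
  tangent-line bound for the convex function t^(2/p), which yields the first branch of C1;
  for j > 2k both sides are explicit and give 2^(1/2 - 1/p). The two branches are compared
  through the function of the equation defining p*, which is strictly decreasing, so C1 is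
  their maximum.\<close>

lemma reverse_Bernoulli_inequality_powr:
  fixes p t :: real
  assumes "0 \<le> p" "p \<le> 1" "0 \<le> t"
  shows "t powr p \<le> 1 + p * (t - 1)"
proof (cases "t = 0")
  case False
  then have "t powr p * 1 powr (1 - p) \<le> p * t + (1 - p) * 1"
    using assms by (intro Youngs_inequality_0) auto
  then show ?thesis by (simp add: algebra_simps)
qed (use assms in auto)

lemma Bernoulli_inequality_powr:
  fixes q t :: real
  assumes "1 \<le> q" "0 \<le> t"
  shows "1 + q * (t - 1) \<le> t powr q"
proof -
  have "(t powr q) powr (1/q) \<le> 1 + (1/q) * (t powr q - 1)"
    using assms by (intro reverse_Bernoulli_inequality_powr) auto
  then have "t \<le> 1 + (t powr q - 1) / q"
    using assms by (simp add: powr_powr)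
  then show ?thesis
    using assms by (simp add: field_simps)
qed

lemma powr_concave_combination:
  fixes p x y l :: real
  assumes "0 \<le> p" "p \<le> 1" "0 \<le> x" "0 \<le> y" "0 \<le> l" "l \<le> 1"
  shows "l * x powr p + (1 - l) * y powr p \<le> (l * x + (1 - l) * y) powr p"
proof -
  define z where "z = l * x + (1 - l) * y"
  have "0 \<le> l * x" "0 \<le> (1 - l) * y"
    using assms by simp_all
  then consider "z = 0" "l * x = 0" "(1 - l) * y = 0" | "0 < z"
    unfolding z_def by fastforce
  then show ?thesis
  proof cases
    case 2
    have "l * (x / z) powr p + (1 - l) * (y / z) powr p
          \<le> l * (1 + p * (x / z - 1)) + (1 - l) * (1 + p * (y / z - 1))"
      using assms 2 by (intro add_mono mult_left_mono reverse_Bernoulli_inequality_powr) auto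
    also have "\<dots> = 1 + p * ((l * x + (1 - l) * y) / z - 1)"
      using 2 by (simp add: field_simps)
    also have "\<dots> = 1"
      using 2 by (simp flip: z_def)
    finally have "(l * x powr p + (1 - l) * y powr p) / z powr p \<le> 1"
      using assms 2 by (simp add: powr_divide add_divide_distrib)
    then show ?thesis
      using 2 by (simp add: z_def pos_divide_le_eq)
  qed auto
qed

definition Lp_set :: "real \<Rightarrow> ('a \<Rightarrow> real) \<Rightarrow> 'a set \<Rightarrow> real" where
  "Lp_set p f A = (\<Sum>i\<in>A. f i powr p) powr (1/p)"

lemma Lp_set_cong:
  "A = B \<Longrightarrow> (\<And>x. x \<in> B \<Longrightarrow> f x = g x) \<Longrightarrow> Lp_set p f A = Lp_set p g B"
  unfolding Lp_set_def by (simp cong: sum.cong)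

lemma Lp_set_nonneg [simp]: "0 \<le> Lp_set p f A"
  by (simp add: Lp_set_def)

lemma Lp_set_eq_0_iff:
  assumes "0 < p" "finite A" "\<And>i. i \<in> A \<Longrightarrow> 0 \<le> f i"
  shows "Lp_set p f A = 0 \<longleftrightarrow> (\<forall>i\<in>A. f i = 0)"
  using assms by (simp add: Lp_set_def sum_nonneg_eq_0_iff)

lemma Lp_set_powr:
  assumes "0 < p" "\<And>i. i \<in> A \<Longrightarrow> 0 \<le> f i"
  shows "Lp_set p f A powr p = (\<Sum>i\<in>A. f i powr p)"
  using assms by (simp add: Lp_set_def powr_powr sum_nonneg)

lemma Lp_set_right_distrib:
  assumes "0 < p" "0 \<le> r" "\<And>i. i \<in> A \<Longrightarrow> 0 \<le> f i"
  shows "r * Lp_set p f A = Lp_set p (\<lambda>i. r * f i) A"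
proof -
  have "(\<Sum>i\<in>A. (r * f i) powr p) = r powr p * (\<Sum>i\<in>A. f i powr p)"
    using assms by (simp add: powr_mult sum_distrib_left)
  then show ?thesis
    using assms by (simp add: Lp_set_def powr_mult powr_powr sum_nonneg)
qed

lemma Lp_set_add_ge:
  assumes p: "0 < p" "p \<le> 1" and A: "finite A"
    and f: "\<And>i. i \<in> A \<Longrightarrow> 0 \<le> f i" and g: "\<And>i. i \<in> A \<Longrightarrow> 0 \<le> g i"
  shows "Lp_set p f A + Lp_set p g A \<le> Lp_set p (\<lambda>i. f i + g i) A"
proof -
  define F G where "F = Lp_set p f A" and "G = Lp_set p g A"
  consider "F = 0" | "G = 0" | "0 < F" "0 < G"
    unfolding F_def G_def by (metis Lp_set_nonneg order_le_less)
  then show ?thesis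
  proof cases
    case 1
    then have "Lp_set p (\<lambda>i. f i + g i) A = Lp_set p g A"
      using Lp_set_eq_0_iff[OF p(1) A f] by (intro Lp_set_cong) (auto simp: F_def G_def)
    then show ?thesis using 1 by (simp add: F_def G_def)
  next
    case 2
    then have "Lp_set p (\<lambda>i. f i + g i) A = Lp_set p f A"
      using Lp_set_eq_0_iff[OF p(1) A g] by (intro Lp_set_cong) (auto simp: F_def G_def)
    then show ?thesis using 2 by (simp add: F_def G_def)
  next
    case 3
    \<comment> \<open>normalise f, g by F, G; concavity of powr with weights F/(F+G), G/(F+G) sums to
      (F + G) powr p \<le> (\<Sum>i\<in>A. (f i + g i) powr p)\<close>
    define l where "l = F / (F + G)"
    have l: "0 \<le> l" "l \<le> 1" "1 - l = G / (F + G)"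
      using 3 by (auto simp: l_def field_simps)
    have pointwise: "l * (f i / F) powr p + (1 - l) * (g i / G) powr p
                     \<le> ((f i + g i) / (F + G)) powr p" if "i \<in> A" for i
    proof -
      have "l * (f i / F) = f i / (F + G)"
        using 3 by (simp add: l_def)
      moreover have "(1 - l) * (g i / G) = g i / (F + G)"
        using 3 by (simp add: l(3))
      ultimately have "l * (f i / F) + (1 - l) * (g i / G) = (f i + g i) / (F + G)"
        by (simp add: add_divide_distrib)
      then show ?thesis
        using powr_concave_combination[of p "f i / F" "g i / G" l] p f g that 3 l by simp
    qed
    have "(\<Sum>i\<in>A. f i powr p) = F powr p" "(\<Sum>i\<in>A. g i powr p) = G powr p"
      using p f g by (simp_all add: F_def G_def Lp_set_powr)
    then have "1 = l * ((\<Sum>i\<in>A. f i powr p) / F powr p) + (1 - l) * ((\<Sum>i\<in>A. g i powr p) / G powr p)"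
      using 3 by simp
    also have "\<dots> = (\<Sum>i\<in>A. l * (f i / F) powr p + (1 - l) * (g i / G) powr p)"
      using 3 f g by (simp add: powr_divide sum.distrib sum_distrib_left sum_divide_distrib)
    also have "\<dots> \<le> (\<Sum>i\<in>A. ((f i + g i) / (F + G)) powr p)"
      by (rule sum_mono) (rule pointwise)
    also have "\<dots> = (\<Sum>i\<in>A. (f i + g i) powr p) / (F + G) powr p"
      using 3 f g by (simp add: powr_divide sum_divide_distrib)
    finally have "(F + G) powr p \<le> (\<Sum>i\<in>A. (f i + g i) powr p)"
      using 3 by simp
    then have "((F + G) powr p) powr (1/p) \<le> Lp_set p (\<lambda>i. f i + g i) A"
      unfolding Lp_set_def using p 3 by (intro powr_mono2) auto
    then show ?thesis
      using p 3 by (simp add: powr_powr F_def G_def)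
  qed
qed

lemma Lp_set_sum_ge:
  assumes p: "0 < p" "p \<le> 1" and "finite A" "finite J"
    and g: "\<And>j i. j \<in> J \<Longrightarrow> i \<in> A \<Longrightarrow> 0 \<le> g j i"
  shows "(\<Sum>j\<in>J. Lp_set p (g j) A) \<le> Lp_set p (\<lambda>i. \<Sum>j\<in>J. g j i) A"
  using \<open>finite J\<close> g
proof (induction J rule: finite_induct)
  case empty
  then show ?case by simp
next
  case (insert j J)
  then have "(\<Sum>j\<in>insert j J. Lp_set p (g j) A) \<le> Lp_set p (g j) A + Lp_set p (\<lambda>i. \<Sum>j\<in>J. g j i) A"
    by simp
  also have "\<dots> \<le> Lp_set p (\<lambda>i. g j i + (\<Sum>j\<in>J. g j i)) A"
    using insert.prems by (intro Lp_set_add_ge p \<open>finite A\<close>) (auto intro: sum_nonneg)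
  finally show ?case
    using insert.hyps by simp
qed

lemma L2_set_sum_le:
  assumes "finite J"
  shows "L2_set (\<lambda>i. \<Sum>j\<in>J. g j i) A \<le> (\<Sum>j\<in>J. L2_set (g j) A)"
  using assms
proof (induction J rule: finite_induct)
  case (insert j J)
  have "L2_set (\<lambda>i. g j i + (\<Sum>j\<in>J. g j i)) A \<le> L2_set (g j) A + L2_set (\<lambda>i. \<Sum>j\<in>J. g j i) A"
    by (rule L2_set_triangle_ineq)
  with insert show ?case by simp
qed (simp add: L2_set_def)

definition step_seq :: "nat \<Rightarrow> nat \<Rightarrow> real" where
  "step_seq j i = of_bool (i \<le> j)"

lemma L2_set_step_seq:
  assumes "finite A"
  shows "L2_set (step_seq j) A = sqrt (card (A \<inter> {..j}))"
proof -
  have "(\<Sum>i\<in>A. (step_seq j i)\<^sup>2) = (\<Sum>i\<in>A. of_bool (i \<le> j))"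
    by (intro sum.cong) (auto simp: step_seq_def)
  then show ?thesis
    using assms by (simp add: L2_set_def atMost_def)
qed

lemma Lp_set_step_seq:
  assumes "0 < p" "finite A"
  shows "Lp_set p (step_seq j) A = card (A \<inter> {..j}) powr (1/p)"
proof -
  have "(\<Sum>i\<in>A. step_seq j i powr p) = (\<Sum>i\<in>A. of_bool (i \<le> j))"
    using assms by (intro sum.cong) (auto simp: step_seq_def)
  then show ?thesis
    using assms by (simp add: Lp_set_def atMost_def)
qed

lemma nonincreasing_eq_sum_step_seq:
  fixes u :: "nat \<Rightarrow> real"
  assumes mono: "\<And>i j. 1 \<le> i \<Longrightarrow> i \<le> j \<Longrightarrow> j \<le> n \<Longrightarrow> u j \<le> u i" and "0 \<le> u n"
  obtains v where "\<And>j. j \<in> {1..n} \<Longrightarrow> 0 \<le> v j"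
    and "\<And>i. i \<in> {1..n} \<Longrightarrow> u i = (\<Sum>j\<in>{1..n}. v j * step_seq j i)"
proof
  define v where "v j = (if j < n then u j - u (Suc j) else u n)" for j
  show "0 \<le> v j" if "j \<in> {1..n}" for j
    using that mono[of j "Suc j"] \<open>0 \<le> u n\<close> by (auto simp: v_def)
  show "u i = (\<Sum>j\<in>{1..n}. v j * step_seq j i)" if i: "i \<in> {1..n}" for i
  proof -
    have "{j\<in>{1..n}. i \<le> j} = {i..n}"
      using i by auto
    then have "(\<Sum>j\<in>{1..n}. v j * step_seq j i) = (\<Sum>j\<in>{i..n}. v j)"
      by (simp add: step_seq_def sum.inter_filter[symmetric] of_bool_def if_distrib cong: if_cong)
    also have "{i..n} = insert n {i..<n}"
      using i by auto
    also have "(\<Sum>j\<in>insert n {i..<n}. v j) = u n + (\<Sum>j\<in>{i..<n}. u j - u (Suc j))"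
      by (simp add: v_def)
    also have "(\<Sum>j\<in>{i..<n}. u j - u (Suc j)) = u i - u n"
      using i sum_Suc_diff'[of i n "\<lambda>j. - u j"] by simp
    finally show ?thesis by simp
  qed
qed

lemma L2_set_le_Lp_set_if_step_seq:
  fixes u :: "nat \<Rightarrow> real"
  assumes p: "0 < p" "p \<le> 1" and "0 \<le> C" and A: "A \<subseteq> {1..n}" and B: "B \<subseteq> {1..n}"
    and steps: "\<And>j. j \<in> {1..n} \<Longrightarrow> L2_set (step_seq j) A \<le> C * Lp_set p (step_seq j) B"
    and mono: "\<And>i j. 1 \<le> i \<Longrightarrow> i \<le> j \<Longrightarrow> j \<le> n \<Longrightarrow> u j \<le> u i" and "0 \<le> u n"
  shows "L2_set u A \<le> C * Lp_set p u B"
proof -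
  obtain v where v: "\<And>j. j \<in> {1..n} \<Longrightarrow> 0 \<le> v j"
    and u: "\<And>i. i \<in> {1..n} \<Longrightarrow> u i = (\<Sum>j\<in>{1..n}. v j * step_seq j i)"
    using nonincreasing_eq_sum_step_seq[of n u] mono \<open>0 \<le> u n\<close> by blast
  have finite: "finite A" "finite B"
    using A B finite_subset by blast+
  have "L2_set u A = L2_set (\<lambda>i. \<Sum>j\<in>{1..n}. v j * step_seq j i) A"
    using A u by (intro L2_set_cong) auto
  also have "\<dots> \<le> (\<Sum>j\<in>{1..n}. L2_set (\<lambda>i. v j * step_seq j i) A)"
    by (intro L2_set_sum_le) simp
  also have "\<dots> = (\<Sum>j\<in>{1..n}. v j * L2_set (step_seq j) A)"
    using v by (intro sum.cong refl L2_set_right_distrib[symmetric]) auto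
  also have "\<dots> \<le> (\<Sum>j\<in>{1..n}. v j * (C * Lp_set p (step_seq j) B))"
    using v steps by (intro sum_mono mult_left_mono) auto
  also have "\<dots> = C * (\<Sum>j\<in>{1..n}. Lp_set p (\<lambda>i. v j * step_seq j i) B)"
    using v p by (simp add: sum_distrib_left Lp_set_right_distrib step_seq_def mult.left_commute)
  also have "\<dots> \<le> C * Lp_set p (\<lambda>i. \<Sum>j\<in>{1..n}. v j * step_seq j i) B"
    using v p finite \<open>0 \<le> C\<close> by (intro mult_left_mono Lp_set_sum_ge) (auto simp: step_seq_def)
  also have "Lp_set p (\<lambda>i. \<Sum>j\<in>{1..n}. v j * step_seq j i) B = Lp_set p u B"
    using B u by (intro Lp_set_cong) auto
  finally show ?thesis .
qed

text \<open>The function in the equation defining pstar; it is also the ratio of the first branch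
  of C1 to the second.\<close>

definition C1_ratio :: "real \<Rightarrow> real" where
  "C1_ratio p = (p/2) powr (1/2) * (2 - p) powr (1/p - 1/2)"

lemma C1_ratio_strict_decreasing:
  assumes "0 < a" "a < b" "b \<le> 1"
  shows "C1_ratio b < C1_ratio a"
proof -
  define g where "g p = ln (p/2) / 2 + (1/p - 1/2) * ln (2 - p)" for p :: real
  have exp_g: "C1_ratio p = exp (g p)" if "0 < p" "p < 2" for p
    using that by (simp add: C1_ratio_def g_def powr_def exp_add mult.commute)
  have deriv: "(g has_real_derivative - ln (2 - x) / x\<^sup>2) (at x)" if "0 < x" "x < 2" for x
  proof -
    have "(g has_real_derivative 1 / (2 * x) + (- (1 / x\<^sup>2) * ln (2 - x) - (1/x - 1/2) / (2 - x))) (at x)"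
      unfolding g_def using that
      by (auto intro!: derivative_eq_intros simp: power2_eq_square)
    moreover have "1 / (2 * x) + (- (1 / x\<^sup>2) * ln (2 - x) - (1/x - 1/2) / (2 - x)) = - ln (2 - x) / x\<^sup>2"
      using that by (simp add: field_simps power2_eq_square)
    ultimately show ?thesis by simp
  qed
  have "\<exists>y. (g has_real_derivative y) (at x) \<and> y < 0" if "a < x" "x < b" for x
    using that assms deriv[of x] by (intro exI[of _ "- ln (2 - x) / x\<^sup>2"]) (auto intro: divide_neg_pos)
  moreover have "continuous_on {a..b} g"
    unfolding g_def using assms by (intro continuous_intros) auto
  ultimately have "g b < g a"
    using assms by (intro DERIV_neg_imp_decreasing_open[of a b g]) auto
  then show ?thesis
    using assms by (simp add: exp_g)
qed

lemma pstar_root: "0 < pstar" "pstar \<le> 1" "C1_ratio pstar = 1"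
proof -
  have "C1_ratio 1 < 1"
    by (simp add: C1_ratio_def powr_half_sqrt)
  moreover have "1 < C1_ratio (2/5)"
  proof -
    have "(25/64::real) < sqrt (1/5)"
      by (rule real_less_rsqrt) (simp add: power2_eq_square)
    then show ?thesis
      by (simp add: C1_ratio_def powr_half_sqrt power2_eq_square)
  qed
  moreover have "continuous_on {2/5..1} C1_ratio"
    unfolding C1_ratio_def by (intro continuous_intros) auto
  ultimately obtain x where x: "2/5 \<le> x" "x \<le> 1" "C1_ratio x = 1"
    using IVT2'[of C1_ratio 1 1 "2/5"] by auto
  have "p = x" if "p \<in> {0<..1}" "C1_ratio p = 1" for p
    using that x C1_ratio_strict_decreasing[of p x] C1_ratio_strict_decreasing[of x p]
    by (cases p x rule: linorder_cases) auto
  then have "\<exists>!p. p \<in> {0<..1} \<and> C1_ratio p = 1"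
    using x by (intro ex1I[of _ x]) auto
  from theI'[OF this] show "0 < pstar" "pstar \<le> 1" "C1_ratio pstar = 1"
    unfolding pstar_def C1_ratio_def[symmetric] by auto
qed

lemma one_le_C1_ratio_iff:
  assumes "0 < p" "p \<le> 1"
  shows "1 \<le> C1_ratio p \<longleftrightarrow> p \<le> pstar"
  using assms pstar_root C1_ratio_strict_decreasing[of p pstar] C1_ratio_strict_decreasing[of pstar p]
  by (cases p pstar rule: linorder_cases) auto

lemma C1_eq_max:
  assumes "0 < p" "p \<le> 1"
  shows "C1 p = max ((p/2) powr (1/2) * (2/(2 - p)) powr (1/2 - 1/p)) (2 powr (1/2 - 1/p))"
proof -
  define B where "B = 2 powr (1/2 - 1/p)"
  have "(2 - p) powr (1/p - 1/2) * (2 - p) powr (1/2 - 1/p) = 1"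
    using assms by (simp flip: powr_add)
  then have "(2/(2 - p)) powr (1/2 - 1/p) = (2 - p) powr (1/p - 1/2) * B"
    using assms by (simp add: B_def powr_divide field_simps)
  then have A: "(p/2) powr (1/2) * (2/(2 - p)) powr (1/2 - 1/p) = C1_ratio p * B"
    by (simp add: C1_ratio_def)
  have "0 < B"
    by (simp add: B_def)
  then show ?thesis
    using one_le_C1_ratio_iff[OF assms] unfolding C1_def A B_def[symmetric]
    by (auto simp: max_def)
qed

lemma C1_pos: "0 < p \<Longrightarrow> p \<le> 1 \<Longrightarrow> 0 < C1 p"
  by (simp add: C1_eq_max less_max_iff_disj)

text \<open>The constant is the least possible: equality holds at the tangent point t = 2/(2 - p).\<close>

lemma diff_one_le_scaled_powr:
  fixes p t :: real
  assumes "0 < p" "p < 2" "0 \<le> t"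
  shows "t - 1 \<le> (p/2) * (2/(2 - p)) powr (1 - 2/p) * t powr (2/p)"
proof -
  define q y where "q = 2/p" and "y = 2/(2 - p)"
  have "0 < y" "1 \<le> q"
    using assms by (simp_all add: q_def y_def)
  then have "(y/q) * (1 + q * (t/y - 1)) \<le> (y/q) * (t/y) powr q"
    using assms by (intro mult_left_mono Bernoulli_inequality_powr) auto
  moreover have "(y/q) * (1 + q * (t/y - 1)) = t - 1"
    using assms by (simp add: q_def y_def field_simps)
  moreover have "y powr (1 - q) = y / y powr q"
    using \<open>0 < y\<close> by (simp add: powr_diff)
  then have "(y/q) * (t/y) powr q = (p/2) * y powr (1 - q) * t powr q"
    using assms \<open>0 < y\<close> by (simp add: q_def powr_divide)
  ultimately show ?thesis
    by (simp add: q_def y_def)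
qed

lemma sqrt_diff_le_C1_powr:
  fixes p K J :: real
  assumes "0 < p" "p < 2" "0 < K" "K \<le> J"
  shows "sqrt (J - K) \<le> (p/2) powr (1/2) * (2/(2 - p)) powr (1/2 - 1/p) * K powr (1/2 - 1/p) * J powr (1/p)"
    (is "_ \<le> ?R")
proof -
  define y where "y = 2/(2 - p)"
  have sq: "(x powr e)\<^sup>2 = x powr (2 * e)" for x e :: real
    by (simp add: power2_eq_square flip: powr_add)
  have "J - K = K * (J/K - 1)"
    using assms by (simp add: field_simps)
  also have "\<dots> \<le> K * ((p/2) * y powr (1 - 2/p) * (J/K) powr (2/p))"
    unfolding y_def using assms by (intro mult_left_mono diff_one_le_scaled_powr) auto
  also have "\<dots> = (p/2) * y powr (1 - 2/p) * K powr (1 - 2/p) * J powr (2/p)"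
    using assms by (simp add: powr_divide powr_diff)
  also have "\<dots> = ?R\<^sup>2"
    using assms by (simp add: y_def power_mult_distrib sq algebra_simps)
  finally show ?thesis
    using real_sqrt_le_mono[of "J - K" "?R\<^sup>2"] by simp
qed

lemma L2_set_step_seq_le_C1:
  assumes p: "0 < p" "p \<le> 1" and "1 \<le> k" "j \<le> 3*k"
  shows "L2_set (step_seq j) {k+1..3*k} \<le> C1 p * real k powr (1/2 - 1/p) * Lp_set p (step_seq j) {1..2*k}"
proof -
  have L2: "L2_set (step_seq j) {k+1..3*k} = sqrt (real (j - k))"
    and Lp: "Lp_set p (step_seq j) {1..2*k} = real (min j (2*k)) powr (1/p)"
    using \<open>j \<le> 3*k\<close> by (simp_all add: L2_set_step_seq Lp_set_step_seq p(1) min_def)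
  consider "j \<le> k" | "k < j" "j \<le> 2*k" | "2*k < j"
    by linarith
  then show ?thesis
  proof cases
    case 1
    then show ?thesis
      unfolding L2 Lp using C1_pos[OF p] by simp
  next
    case 2
    have "sqrt (real (j - k))
          \<le> (p/2) powr (1/2) * (2/(2 - p)) powr (1/2 - 1/p) * real k powr (1/2 - 1/p) * real j powr (1/p)"
      using 2 p \<open>1 \<le> k\<close> sqrt_diff_le_C1_powr[of p k j] by (simp add: of_nat_diff)
    also have "\<dots> \<le> C1 p * real k powr (1/2 - 1/p) * real j powr (1/p)"
      using p by (intro mult_right_mono) (auto simp: C1_eq_max)
    finally show ?thesis
      unfolding L2 Lp using 2 by simp
  next
    case 3
    have "sqrt (real (j - k)) \<le> sqrt (2 * real k)"
      using \<open>j \<le> 3*k\<close> by simp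
    also have "\<dots> = 2 powr (1/2 - 1/p) * real k powr (1/2 - 1/p) * (2 * real k) powr (1/p)"
      by (simp add: powr_half_sqrt flip: powr_mult powr_add)
    also have "\<dots> \<le> C1 p * real k powr (1/2 - 1/p) * (2 * real k) powr (1/p)"
      using p by (intro mult_right_mono) (auto simp: C1_eq_max)
    finally show ?thesis
      unfolding L2 Lp using 3 by simp
  qed
qed

theorem corollary5:
  fixes p :: real and k :: nat and u :: "nat \<Rightarrow> real"
  assumes "0 < p" "p < 1" "k \<ge> 1"
    and "\<And>i j. 1 \<le> i \<Longrightarrow> i \<le> j \<Longrightarrow> j \<le> 3*k \<Longrightarrow> u j \<le> u i"
    and "\<And>i. 1 \<le> i \<Longrightarrow> i \<le> 3*k \<Longrightarrow> 0 \<le> u i"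
  shows "(\<Sum>i=k+1..3*k. (u i)^2) powr (1/2)
         \<le> C1 p * real k powr (1/2 - 1/p) * (\<Sum>i=1..2*k. u i powr p) powr (1/p)"
proof -
  have "(\<Sum>i=k+1..3*k. (u i)^2) powr (1/2) = L2_set u {k+1..3*k}"
    by (simp add: L2_set_def powr_half_sqrt sum_nonneg)
  also have "\<dots> \<le> C1 p * real k powr (1/2 - 1/p) * Lp_set p u {1..2*k}"
  proof (rule L2_set_le_Lp_set_if_step_seq[where n = "3*k"])
    show "0 \<le> C1 p * real k powr (1/2 - 1/p)"
      using C1_pos[of p] assms by simp
    show "L2_set (step_seq j) {k+1..3*k} \<le> C1 p * real k powr (1/2 - 1/p) * Lp_set p (step_seq j) {1..2*k}"
      if "j \<in> {1..3*k}" for j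
      using that assms by (intro L2_set_step_seq_le_C1) auto
  qed (use assms in auto)
  finally show ?thesis
    by (simp add: Lp_set_def)
qed

end
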